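(* Let $k$ be the number of frequent items and let $M$ be the maximum level of the tree, where $M$ does not exceed the maximal length of a preprocessed transaction. Let the cut-down size parameter $\xi$ be a fixed constant. Then the computational complexity of constructing a noisy FP-tree by the procedure ConstructNoisyTree described below is $O(k^3)$.
   Context: Setting. There is a domain $\mathcal{X}=\{x_1,\dots,x_d\}$ of items; each user holds a transaction $t\subseteq\mathcal{X}$. A set $S'$ of $k$ "frequent items" is given, ordered $x_1\succ x_2\succ\cdots\succ x_k$ (descending estimated frequency), together with estimated item frequencies. A positive integer $M$ (maximum tree level), a privacy parameter $\epsilon>0$ and a constant $\xi>0$ are given. Procedure ConstructNoisyTree$(G_3,S',M,\epsilon)$ on a group $G_3$ of users: (1) Split $G_3$ randomly into $M$ groups $g_1,\dots,g_M$ of size $n_g=\lfloor |G_3|/M\rfloor$. (2) Preprocessing: each user deletes items not in $S'$ and sorts the remaining items in the order $\succ$; since every preprocessed transaction has at most $k$ items, one has $M\le k$. (3) The tree is initialized with a root (level 0) of count $n_g$; each node $v$ stores an item $v.item$ and a count $v.count$, and corresponds to the prefix $\bar p_v$ formed by the items on the path from the root to $v$. (4) For $l=1,\dots,M$: for each node $v$ at level $l-1$ with positive count, add a child $v_c$ (count $0$) for every item $x\in S'$ ranked after $v.item$ (every $x\in S'$ if $v$ is the root); the prefixes of these children form the candidate set $C_l$. If $|C_l|>\xi k$, keep only the $\xi k$ candidates with the highest temporal guessing frequency $\mathbb{T}(\bar p_v)=\tilde f(\bar p_{\mathrm{parent}(v)})\cdot \bar f(v)$, where, if $v.item=x_{i+j}$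 and the parent's item is $x_i$, $\bar f(v)=\tilde f(x_{i+j})\prod_{t=1}^{j-1}(1-\tilde f(x_{i+t}))$ with $\tilde f$ the (normalized) estimated item frequencies. Each user of $g_l$ then reports, via the OLH frequency oracle with budget $\epsilon$ over the domain $C_l\cup\{\dagger\}$, the prefix formed by her first $l$ preprocessed items (or the dummy value $\dagger$ if it is not in $C_l$); the analyst computes the estimated count of each node at level $l$ and replaces negative counts by $0$. The complexity is measured as a function of $k$ (with $\xi$ constant), counting the candidate nodes generated and processed over all levels of the tree. *)

theory Defs
  imports Main "HOL.Real"
begin

text \<open>The k frequent items of S' are encoded as
the indices 0,...,k-1, index i standing for x_(i+1) (so smaller index = higher rank).
A tree node is identified with its prefix: a list of item indices, strictly increasing
(the items on the path from the root).\<close>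

definition children :: "nat \<Rightarrow> nat list \<Rightarrow> nat list set" where
  "children k v = {v @ [x] | x. x < k \<and> (v = [] \<or> last v < x)}"

text \<open>Count of a node: the root has count n_g, other nodes have the (clipped)
estimated count produced by the frequency oracle, given by an arbitrary function cnt.\<close>
definition node_count :: "nat \<Rightarrow> (nat list \<Rightarrow> real) \<Rightarrow> nat list \<Rightarrow> real" where
  "node_count n_g cnt v = (if v = [] then real n_g else cnt v)"

definition candidates :: "nat \<Rightarrow> nat \<Rightarrow> (nat list \<Rightarrow> real) \<Rightarrow> nat list set \<Rightarrow> nat list set" where
  "candidates k n_g cnt V = (\<Union>v \<in> {v \<in> V. node_count n_g cnt v > 0}. children k v)"

text \<open>bar f(v): if v.item = x_(i+j) and the parent item is x_i, this is
 f(x_(i+j)) * prod_(t=1..j-1) (1 - f(x_(i+t))); for a child of the root the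
 product runs over all items ranked before v.item.  fi are the normalized estimated
 item frequencies.\<close>
definition fbar :: "(nat \<Rightarrow> real) \<Rightarrow> nat list \<Rightarrow> real" where
  "fbar fi p = (let q = butlast p; x = last p; s = (if q = [] then 0 else Suc (last q))
               in fi x * (\<Prod>t\<in>{s..<x}. 1 - fi t))"

definition tgf :: "(nat \<Rightarrow> real) \<Rightarrow> nat \<Rightarrow> (nat list \<Rightarrow> real) \<Rightarrow> nat list \<Rightarrow> real" where
  "tgf fi n_g cnt p = node_count n_g cnt (butlast p) / real n_g * fbar fi p"

text \<open>L l is the set of nodes kept at level l.\<close>
definition valid_levels ::
  "nat \<Rightarrow> nat \<Rightarrow> real \<Rightarrow> nat \<Rightarrow> (nat list \<Rightarrow> real) \<Rightarrow> (nat \<Rightarrow> real) \<Rightarrow> (nat \<Rightarrow> nat list set) \<Rightarrow> bool" where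
  "valid_levels k M \<xi> n_g cnt fi L \<longleftrightarrow>
     L 0 = {[]} \<and>
     (\<forall>l\<in>{1..M}. let C = candidates k n_g cnt (L (l - 1)) in
        (if real (card C) > \<xi> * real k
         then L l \<subseteq> C \<and> card (L l) = nat \<lfloor>\<xi> * real k\<rfloor> \<and>
              (\<forall>a\<in>L l. \<forall>b\<in>C - L l. tgf fi n_g cnt b \<le> tgf fi n_g cnt a)
         else L l = C))"

text \<open>Cost: total number of candidate nodes generated and processed over all levels.\<close>
definition construction_cost :: "nat \<Rightarrow> nat \<Rightarrow> nat \<Rightarrow> (nat list \<Rightarrow> real) \<Rightarrow> (nat \<Rightarrow> nat list set) \<Rightarrow> nat" where
  "construction_cost k M n_g cnt L = (\<Sum>l=1..M. card (candidates k n_g cnt (L (l - 1))))"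

end

theory Submission
  imports Defs
begin

text \<open>Each node has at most k children, so a level with n nodes yields at most n k
candidates.  The cut-down keeps every level below the root at size at most \<xi> k, hence
each of the M \<le> k levels processes at most (1 + \<xi> k) k candidates, for a total of
at most (1 + \<xi>) k^3.\<close>

lemma children_subset_snoc_image: "children k v \<subseteq> (\<lambda>x. v @ [x]) ` {..<k}"
  unfolding children_def by auto

lemma finite_children: "finite (children k v)"
  using children_subset_snoc_image finite_subset by blast

lemma card_children_le: "card (children k v) \<le> k"
  using card_mono[OF _ children_subset_snoc_image] card_image_le[of "{..<k}"]
  by (metis card_lessThan finite_imageI finite_lessThan le_trans)

lemma finite_candidates: "finite V \<Longrightarrow> finite (candidates k n_g cnt V)"
  unfolding candidates_def by (simp add: finite_children)

lemma card_candidates_le: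
  assumes "finite V"
  shows "card (candidates k n_g cnt V) \<le> card V * k"
proof -
  let ?P = "{v \<in> V. node_count n_g cnt v > 0}"
  have "finite ?P" using assms by simp
  then have "card (candidates k n_g cnt V) \<le> (\<Sum>v\<in>?P. card (children k v))"
    unfolding candidates_def by (rule card_UN_le)
  also have "\<dots> \<le> card ?P * k"
    using sum_mono[of ?P "\<lambda>v. card (children k v)" "\<lambda>_. k"] card_children_le by simp
  also have "\<dots> \<le> card V * k" using card_mono[OF assms, of ?P] by simp
  finally show ?thesis .
qed

lemma valid_levels_level_cases:
  assumes "valid_levels k M \<xi> n_g cnt fi L" and "Suc l \<le> M"
  obtains "L (Suc l) = candidates k n_g cnt (L l)"
    and "real (card (candidates k n_g cnt (L l))) \<le> \<xi> * real k"
  | "L (Suc l) \<subseteq> candidates k n_g cnt (L l)"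
    and "real (card (candidates k n_g cnt (L l))) > \<xi> * real k"
    and "card (L (Suc l)) = nat \<lfloor>\<xi> * real k\<rfloor>"
proof -
  have "Suc l \<in> {1..M}" using assms(2) by simp
  with assms(1) have "if real (card (candidates k n_g cnt (L l))) > \<xi> * real k
      then L (Suc l) \<subseteq> candidates k n_g cnt (L l) \<and> card (L (Suc l)) = nat \<lfloor>\<xi> * real k\<rfloor>
        \<and> (\<forall>a\<in>L (Suc l). \<forall>b\<in>candidates k n_g cnt (L l) - L (Suc l).
               tgf fi n_g cnt b \<le> tgf fi n_g cnt a)
      else L (Suc l) = candidates k n_g cnt (L l)"
    unfolding valid_levels_def Let_def by fastforce
  with that show thesis by (auto split: if_splits)
qed

lemma valid_levels_subset_candidates:
  assumes "valid_levels k M \<xi> n_g cnt fi L" and "Suc l \<le> M"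
  shows "L (Suc l) \<subseteq> candidates k n_g cnt (L l)"
  using valid_levels_level_cases[OF assms] by blast

lemma valid_levels_card_Suc_le:
  assumes "0 \<le> \<xi>" and "valid_levels k M \<xi> n_g cnt fi L" and "Suc l \<le> M"
  shows "real (card (L (Suc l))) \<le> \<xi> * real k"
proof (cases rule: valid_levels_level_cases[OF assms(2,3)])
  case 1
  then show ?thesis by simp
next
  case 2
  then show ?thesis using assms(1) by simp
qed

lemma valid_levels_finite:
  assumes "valid_levels k M \<xi> n_g cnt fi L" and "l \<le> M"
  shows "finite (L l)"
  using assms(2)
proof (induction l)
  case 0
  then show ?case using assms(1) unfolding valid_levels_def by simp
next
  case (Suc l)
  then show ?case
    using finite_candidates valid_levels_subset_candidates[OF assms(1)] finite_subset
    by (metis Suc_leD)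
qed

lemma valid_levels_card_le:
  assumes "0 \<le> \<xi>" and "valid_levels k M \<xi> n_g cnt fi L" and "l \<le> M"
  shows "real (card (L l)) \<le> 1 + \<xi> * real k"
proof (cases l)
  case 0
  then show ?thesis using assms unfolding valid_levels_def by simp
next
  case (Suc l')
  then show ?thesis using valid_levels_card_Suc_le[OF assms(1,2)] assms(3) by fastforce
qed

lemma valid_levels_card_candidates_le:
  assumes "0 \<le> \<xi>" and "valid_levels k M \<xi> n_g cnt fi L" and "l \<le> M"
  shows "real (card (candidates k n_g cnt (L l))) \<le> (1 + \<xi> * real k) * real k"
proof -
  have "card (candidates k n_g cnt (L l)) \<le> card (L l) * k"
    by (rule card_candidates_le[OF valid_levels_finite[OF assms(2,3)]])
  then have "real (card (candidates k n_g cnt (L l))) \<le> real (card (L l)) * real k"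
    by (metis of_nat_le_iff of_nat_mult)
  also have "\<dots> \<le> (1 + \<xi> * real k) * real k"
    using valid_levels_card_le[OF assms] by (simp add: mult_right_mono)
  finally show ?thesis .
qed

lemma levels_times_level_bound_le_cube:
  fixes \<xi> :: real and k M :: nat
  assumes "0 \<le> \<xi>" and "M \<le> k"
  shows "real M * ((1 + \<xi> * real k) * real k) \<le> (1 + \<xi>) * real k ^ 3"
proof -
  have "real M * ((1 + \<xi> * real k) * real k) \<le> real k * ((1 + \<xi> * real k) * real k)"
    using assms by (intro mult_right_mono) auto
  also have "\<dots> = real k ^ 2 + \<xi> * real k ^ 3"
    by (simp add: algebra_simps power2_eq_square power3_eq_cube)
  also have "\<dots> \<le> real k ^ 3 + \<xi> * real k ^ 3"
  proof (cases "k = 0")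
    case False
    then have "real k ^ 2 \<le> real k ^ 3" by (intro power_increasing) auto
    then show ?thesis by simp
  qed simp
  finally show ?thesis by (simp add: algebra_simps)
qed

theorem theorem4p1:
  fixes \<xi> :: real
  assumes "\<xi> > 0"
  shows "\<exists>c::real. \<forall>(k::nat) (M::nat) (n_g::nat) (cnt::nat list \<Rightarrow> real) (fi::nat \<Rightarrow> real)
            (L::nat \<Rightarrow> nat list set).
           M \<le> k \<longrightarrow> valid_levels k M \<xi> n_g cnt fi L \<longrightarrow>
           real (construction_cost k M n_g cnt L) \<le> c * real k ^ 3"
proof (intro exI allI impI)
  fix k M n_g cnt fi L
  assume "M \<le> k" and levels: "valid_levels k M \<xi> n_g cnt fi L"
  have "real (construction_cost k M n_g cnt L)
      = (\<Sum>l=1..M. real (card (candidates k n_g cnt (L (l - 1)))))"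
    unfolding construction_cost_def by simp
  also have "\<dots> \<le> (\<Sum>l=1..M. (1 + \<xi> * real k) * real k)"
    using assms by (intro sum_mono valid_levels_card_candidates_le[OF _ levels]) auto
  also have "\<dots> \<le> (1 + \<xi>) * real k ^ 3"
    using levels_times_level_bound_le_cube[OF _ \<open>M \<le> k\<close>] assms by simp
  finally show "real (construction_cost k M n_g cnt L) \<le> (1 + \<xi>) * real k ^ 3" .
qed

end
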